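(* Let $h$ be an isometry of the Urysohn metric space $\mathbb U$ and let $\delta>0$. Then for every finite $\mathbf A\subseteq\mathbb U$ there is an isometry $f$ of $\mathbb U$ such that $d(f(a),h(a))\leq\delta$ for all $a\in\mathbf A$, while $d(a,f(b))\geq\delta$ for all $a,b\in\mathbf A$.
   Context: The Urysohn metric space $\mathbb U$ is, up to isometry, the unique complete separable metric space such that every isometric embedding of a finite metric space $\mathbf A$ into $\mathbb U$ extends to any one-point metric extension $\mathbf A\cup\{y\}$ of $\mathbf A$. *)

theory Defs
  imports "HOL-Analysis.Analysis"
begin

definition isometry_of :: "('a::metric_space \<Rightarrow> 'a) \<Rightarrow> bool" where
  "isometry_of f \<longleftrightarrow> bij f \<and> (\<forall>x y. dist (f x) (f y) = dist x y)"

text \<open>Finite metric spaces are represented (up to isometry)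
  by finite sets of natural numbers with a metric.\<close>
definition urysohn_extension_property :: "'a::metric_space itself \<Rightarrow> bool" where
  "urysohn_extension_property TYPE('a) \<longleftrightarrow>
    (\<forall>(S::nat set) (y::nat) (d::nat \<Rightarrow> nat \<Rightarrow> real) (e::nat \<Rightarrow> 'a).
       finite S \<and> y \<notin> S \<and> Metric_space (insert y S) d \<and>
       (\<forall>a\<in>S. \<forall>b\<in>S. dist (e a) (e b) = d a b)
       \<longrightarrow> (\<exists>u::'a. \<forall>a\<in>S. dist u (e a) = d y a))"

definition is_urysohn_space :: "'a::complete_space itself \<Rightarrow> bool" where
  "is_urysohn_space TYPE('a) \<longleftrightarrow>
    (\<exists>D::'a set. countable D \<and> closure D = UNIV) \<and> urysohn_extension_property TYPE('a)"

end

theory Submission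
  imports Defs
begin

text \<open>The Urysohn space is ultrahomogeneous: by a back-and-forth construction along a countable
  dense set, an isometry between finite subsets extends to an isometric map between dense subsets
  with dense image, and by completeness this extends to a bijective isometry of the whole space.
  It therefore suffices to find a map b, isometric on A, with d(b a, z) = d(h a, z) + \<delta> for all
  z in A \<union> h A: then d(b a, h a) = \<delta> and d(c, b a) \<ge> \<delta> for c in A. Such a b is built one point
  at a time from the extension property, since adding \<delta> to the distance function d(h a, -)
  preserves the triangle inequalities with respect to the previously placed points.\<close>

text \<open>The values r i prescribe the distances from a new point to the points x i; the inequalities
  are the triangle inequalities of the resulting one-point extension (Katetov functions).\<close>
definition katetov_on :: "'i set \<Rightarrow> ('i \<Rightarrow> 'a::metric_space) \<Rightarrow> ('i \<Rightarrow> real) \<Rightarrow> bool" where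
  "katetov_on I x r \<longleftrightarrow>
    (\<forall>i\<in>I. \<forall>j\<in>I. \<bar>r i - r j\<bar> \<le> dist (x i) (x j) \<and> dist (x i) (x j) \<le> r i + r j)"

definition isometric_on :: "'a::metric_space set \<Rightarrow> ('a \<Rightarrow> 'b::metric_space) \<Rightarrow> bool" where
  "isometric_on S f \<longleftrightarrow> (\<forall>x\<in>S. \<forall>y\<in>S. dist (f x) (f y) = dist x y)"

lemma katetov_on_dist: "katetov_on I x (\<lambda>i. dist w (x i))"
  unfolding katetov_on_def
  by (metis abs_dist_diff_le dist_commute dist_triangle3)

lemma katetov_on_add_const:
  assumes "katetov_on I x r" and "c \<ge> 0"
  shows "katetov_on I x (\<lambda>i. r i + c)"
  using assms unfolding katetov_on_def by force

lemma katetov_on_isometric: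
  assumes "katetov_on I x r" and "\<forall>i\<in>I. \<forall>j\<in>I. dist (y i) (y j) = dist (x i) (x j)"
  shows "katetov_on I y r"
  using assms unfolding katetov_on_def by simp

lemma katetov_on_Plus:
  assumes "katetov_on I x r" and "katetov_on J y s"
    and "\<forall>i\<in>I. \<forall>j\<in>J. \<bar>r i - s j\<bar> \<le> dist (x i) (y j) \<and> dist (x i) (y j) \<le> r i + s j"
  shows "katetov_on (I <+> J) (case_sum x y) (case_sum r s)"
  using assms unfolding katetov_on_def by (auto simp: dist_commute abs_minus_commute add.commute)

lemma urysohn_extension_property_finite_set:
  fixes F :: "'a::metric_space set"
  assumes EP: "urysohn_extension_property TYPE('a)"
    and "finite F" and pos: "\<forall>x\<in>F. r x > 0" and K: "katetov_on F id r"
  shows "\<exists>u. \<forall>x\<in>F. dist u x = r x"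
proof -
  define n where "n = card F"
  obtain g where g: "bij_betw g {..<n} F"
    using \<open>finite F\<close> unfolding n_def
    by (metis atLeast0LessThan ex_bij_betw_nat_finite)
  \<comment> \<open>The absolute values only matter off the carrier, where \<open>Metric_space\<close> still asks for
    nonnegativity.\<close>
  define d where "d i j = (if i = n then if j = n then 0 else \<bar>r (g j)\<bar>
                           else if j = n then \<bar>r (g i)\<bar> else dist (g i) (g j))" for i j
  have gF: "g i \<in> F" if "i < n" for i
    using g that by (auto simp: bij_betw_def)
  have g_eq: "g i = g j \<longleftrightarrow> i = j" if "i < n" "j < n" for i j
    using g that by (auto simp: bij_betw_def inj_on_def)
  have "Metric_space (insert n {..<n}) d"
  proof
    fix i j show "0 \<le> d i j" "d i j = d j i"
      by (auto simp: d_def dist_commute)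
  next
    fix i j assume "i \<in> insert n {..<n}" "j \<in> insert n {..<n}"
    then show "d i j = 0 \<longleftrightarrow> i = j"
      using gF pos g_eq by (auto simp: d_def) (metis less_irrefl)+
  next
    fix i j k assume "i \<in> insert n {..<n}" "j \<in> insert n {..<n}" "k \<in> insert n {..<n}"
    then show "d i k \<le> d i j + d j k"
      using gF[of i] gF[of j] gF[of k] pos K dist_triangle[of "g i" "g k" "g j"]
      unfolding katetov_on_def
      by (cases "i = n"; cases "j = n"; cases "k = n") (force simp: d_def dist_commute)+
  qed
  moreover have "\<forall>i\<in>{..<n}. \<forall>j\<in>{..<n}. dist (g i) (g j) = d i j"
    by (simp add: d_def)
  ultimately obtain u where u: "\<forall>i\<in>{..<n}. dist u (g i) = d n i"
    using EP unfolding urysohn_extension_property_def by (metis finite_lessThan)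
  have "dist u x = r x" if "x \<in> F" for x
  proof -
    obtain i where "i < n" "g i = x"
      using g \<open>x \<in> F\<close> by (auto simp: bij_betw_def)
    then have "dist u x = \<bar>r x\<bar>" using u by (auto simp: d_def)
    then show ?thesis using pos \<open>x \<in> F\<close> by (metis abs_of_pos)
  qed
  then show ?thesis by blast
qed

lemma urysohn_extension_property_family:
  fixes x :: "'i \<Rightarrow> 'a::metric_space"
  assumes EP: "urysohn_extension_property TYPE('a)"
    and "finite I" and pos: "\<forall>i\<in>I. r i > 0" and K: "katetov_on I x r"
  shows "\<exists>u. \<forall>i\<in>I. dist u (x i) = r i"
proof -
  define r' where "r' = r \<circ> inv_into I x"
  \<comment> \<open>Coinciding points get equal radii, as the Katetov inequality forces.\<close>
  have r': "r' (x i) = r i" if "i \<in> I" for i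
  proof -
    define j where "j = inv_into I x (x i)"
    have "j \<in> I" "x j = x i"
      using that by (auto simp: j_def inv_into_into f_inv_into_f)
    then have "\<bar>r i - r j\<bar> \<le> 0"
      using K that unfolding katetov_on_def by (metis dist_self)
    then show ?thesis by (simp add: r'_def j_def)
  qed
  have "katetov_on (x ` I) id r'"
    using K r' unfolding katetov_on_def by auto
  moreover have "\<forall>w\<in>x ` I. r' w > 0"
    using pos r' by auto
  ultimately obtain u where "\<forall>w\<in>x ` I. dist u w = r' w"
    using urysohn_extension_property_finite_set[OF EP finite_imageI[OF \<open>finite I\<close>]] by blast
  then show ?thesis using r' by auto
qed

lemma isometric_on_extend_domain:
  fixes p :: "'a::metric_space \<Rightarrow> 'a"
  assumes EP: "urysohn_extension_property TYPE('a)"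
    and "finite F" and p: "isometric_on F p"
  shows "\<exists>q. isometric_on (insert z F) q \<and> (\<forall>x\<in>F. q x = p x)"
proof (cases "z \<in> F")
  case True
  then show ?thesis using p by (intro exI[of _ p]) (simp add: insert_absorb)
next
  case False
  have "katetov_on F p (\<lambda>x. dist z x)"
    using katetov_on_isometric[OF katetov_on_dist[of F id z]] p
    by (simp add: isometric_on_def)
  moreover have "\<forall>x\<in>F. dist z x > 0"
    using False by auto
  ultimately obtain u where u: "\<forall>x\<in>F. dist u (p x) = dist z x"
    using urysohn_extension_property_family[OF EP \<open>finite F\<close>] by blast
  have "isometric_on (insert z F) (p(z := u))"
    using p u False unfolding isometric_on_def by (simp add: dist_commute)
  then show ?thesis using False by (intro exI[of _ "p(z := u)"]) simp
qed

lemma isometric_on_extend_range: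
  fixes p :: "'a::metric_space \<Rightarrow> 'a"
  assumes EP: "urysohn_extension_property TYPE('a)"
    and "finite F" and p: "isometric_on F p"
  shows "\<exists>y q. isometric_on (insert y F) q \<and> (\<forall>x\<in>F. q x = p x) \<and> q y = w"
proof (cases "w \<in> p ` F")
  case True
  then obtain y where "y \<in> F" "p y = w" by blast
  then show ?thesis using p by (intro exI[of _ y] exI[of _ p]) (simp add: insert_absorb)
next
  case False
  have pos: "\<forall>x\<in>F. dist w (p x) > 0"
    using False by auto
  have "katetov_on F id (\<lambda>x. dist w (p x))"
    using katetov_on_isometric[OF katetov_on_dist[of F p w], where y = id] p
    by (simp add: isometric_on_def)
  then have "\<exists>u. \<forall>x\<in>F. dist u (id x) = dist w (p x)"
    by (rule urysohn_extension_property_family[OF EP \<open>finite F\<close> pos])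
  then obtain u where u: "\<forall>x\<in>F. dist u x = dist w (p x)"
    by auto
  have "u \<notin> F"
  proof
    assume "u \<in> F"
    then have "w = p u" using u by (metis dist_eq_0_iff dist_self)
    with \<open>u \<in> F\<close> False show False by blast
  qed
  then have "isometric_on (insert u F) (p(u := w))"
    using p u unfolding isometric_on_def by (simp add: dist_commute)
  then show ?thesis using \<open>u \<notin> F\<close> by (intro exI[of _ u] exI[of _ "p(u := w)"]) simp
qed

lemma isometric_on_back_and_forth:
  fixes p :: "'a::metric_space \<Rightarrow> 'a"
  assumes EP: "urysohn_extension_property TYPE('a)"
    and "finite F" and "isometric_on F p"
  shows "\<exists>F' q. finite F' \<and> F \<subseteq> F' \<and> isometric_on F' q \<and> (\<forall>x\<in>F. q x = p x) \<and>
                z \<in> F' \<and> z \<in> q ` F'"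
proof -
  obtain q where q: "isometric_on (insert z F) q" "\<forall>x\<in>F. q x = p x"
    using isometric_on_extend_domain[OF assms] by blast
  obtain y q' where q': "isometric_on (insert y (insert z F)) q'"
      "\<forall>x\<in>insert z F. q' x = q x" "q' y = z"
    using isometric_on_extend_range[OF EP _ q(1)] \<open>finite F\<close> by blast
  show ?thesis
    using q' q(2) \<open>finite F\<close> by (intro exI[of _ "insert y (insert z F)"] exI[of _ q']) auto
qed

lemma isometric_on_chain_union:
  assumes mono: "\<And>n. Fs n \<subseteq> Fs (Suc n)"
    and ext: "\<And>n. \<forall>x\<in>Fs n. ps (Suc n) x = ps n x"
    and iso: "\<And>n. isometric_on (Fs n) (ps n)"
  shows "\<exists>P. (\<forall>n. \<forall>x\<in>Fs n. P x = ps n x) \<and> isometric_on (\<Union>n. Fs n) P"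
proof -
  have ext_le: "Fs m \<subseteq> Fs n \<and> (\<forall>x\<in>Fs m. ps n x = ps m x)" if "m \<le> n" for m n
    using that
  proof (induction n rule: dec_induct)
    case (step n)
    then show ?case using mono[of n] ext[of n] by auto
  qed simp
  define P where "P x = ps (LEAST n. x \<in> Fs n) x" for x
  have P_eq: "P x = ps n x" if "x \<in> Fs n" for x n
  proof -
    define m where "m = (LEAST n. x \<in> Fs n)"
    have "x \<in> Fs m" "m \<le> n"
      using that unfolding m_def by (auto intro: LeastI Least_le)
    then show ?thesis using ext_le[of m n] by (simp add: P_def m_def)
  qed
  have "dist (P x) (P y) = dist x y" if "x \<in> Fs m" "y \<in> Fs n" for x y m n
  proof -
    have "x \<in> Fs (max m n)" "y \<in> Fs (max m n)"
      using that ext_le[of m "max m n"] ext_le[of n "max m n"] by auto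
    then show ?thesis using iso[of "max m n"] P_eq by (simp add: isometric_on_def)
  qed
  then have "isometric_on (\<Union>n. Fs n) P"
    by (auto simp: isometric_on_def)
  with P_eq show ?thesis by blast
qed

lemma isometric_on_back_and_forth_sequence:
  fixes p :: "'a::metric_space \<Rightarrow> 'a" and d :: "nat \<Rightarrow> 'a"
  assumes EP: "urysohn_extension_property TYPE('a)"
    and "finite F" and "isometric_on F p"
  obtains Fs ps where "Fs 0 = F" "ps 0 = p"
    "\<And>n. isometric_on (Fs n) (ps n)" "\<And>n. Fs n \<subseteq> Fs (Suc n)" "\<And>n. \<forall>x\<in>Fs n. ps (Suc n) x = ps n x"
    "\<And>n. d n \<in> Fs (Suc n)" "\<And>n. d n \<in> ps (Suc n) ` Fs (Suc n)"
proof -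
  define good where "good n s \<longleftrightarrow>
      finite (fst s) \<and> isometric_on (fst s) (snd s) \<and> (n = 0 \<longrightarrow> s = (F, p))"
    for n :: nat and s :: "'a set \<times> ('a \<Rightarrow> 'a)"
  define covers where "covers n s s' \<longleftrightarrow> fst s \<subseteq> fst s' \<and> (\<forall>x\<in>fst s. snd s' x = snd s x) \<and>
      d n \<in> fst s' \<and> d n \<in> snd s' ` fst s'"
    for n and s s' :: "'a set \<times> ('a \<Rightarrow> 'a)"
  have init: "good 0 (F, p)"
    using assms by (simp add: good_def)
  have step: "\<exists>s'. good (Suc n) s' \<and> covers n s s'" if "good n s" for n s
  proof -
    have s: "finite (fst s)" "isometric_on (fst s) (snd s)"
      using that by (simp_all add: good_def)
    obtain F' q where "finite F'" "fst s \<subseteq> F'" "isometric_on F' q" "\<forall>x\<in>fst s. q x = snd s x"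
        "d n \<in> F'" "d n \<in> q ` F'"
      using isometric_on_back_and_forth[OF EP s, where z = "d n"] by auto
    then have "good (Suc n) (F', q) \<and> covers n s (F', q)"
      by (simp add: good_def covers_def)
    then show ?thesis by blast
  qed
  have "\<exists>s. \<forall>n. good n (s n) \<and> covers n (s n) (s (Suc n))"
    using dependent_nat_choice[of good covers] init step by blast
  then obtain s where s: "\<And>n. good n (s n) \<and> covers n (s n) (s (Suc n))"
    by blast
  have "s 0 = (F, p)"
    using s[of 0] by (simp add: good_def)
  moreover have "isometric_on (fst (s n)) (snd (s n))"
    "fst (s n) \<subseteq> fst (s (Suc n))" "\<forall>x\<in>fst (s n). snd (s (Suc n)) x = snd (s n) x"
    "d n \<in> fst (s (Suc n))" "d n \<in> snd (s (Suc n)) ` fst (s (Suc n))" for n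
    using s[of n] unfolding good_def covers_def by simp_all
  ultimately show thesis
    by (intro that[of "\<lambda>n. fst (s n)" "\<lambda>n. snd (s n)"]) simp_all
qed

lemma isometric_on_extend_to_cover:
  fixes p :: "'a::metric_space \<Rightarrow> 'a"
  assumes EP: "urysohn_extension_property TYPE('a)"
    and "countable D" and "finite F" and "isometric_on F p"
  shows "\<exists>G P. F \<subseteq> G \<and> D \<subseteq> G \<and> D \<subseteq> P ` G \<and> isometric_on G P \<and> (\<forall>x\<in>F. P x = p x)"
proof (cases "D = {}")
  case True
  then show ?thesis using assms by (intro exI[of _ F] exI[of _ p]) simp
next
  case False
  define d where "d = from_nat_into D"
  have D: "D = range d"
    using \<open>countable D\<close> False by (simp add: d_def)
  obtain Fs ps where "Fs 0 = F" "ps 0 = p" and chain: "\<And>n. isometric_on (Fs n) (ps n)"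
    "\<And>n. Fs n \<subseteq> Fs (Suc n)" "\<And>n. \<forall>x\<in>Fs n. ps (Suc n) x = ps n x"
    "\<And>n. d n \<in> Fs (Suc n)" "\<And>n. d n \<in> ps (Suc n) ` Fs (Suc n)"
    using isometric_on_back_and_forth_sequence[OF assms(1,3,4), where d = d] by blast
  obtain P where P: "\<forall>n. \<forall>x\<in>Fs n. P x = ps n x" "isometric_on (\<Union>n. Fs n) P"
    using isometric_on_chain_union[of Fs ps, OF chain(2,3,1)] by blast
  have "ps n ` Fs n = P ` Fs n" for n
    using P(1) by (intro image_cong) simp_all
  moreover have "Fs n \<subseteq> (\<Union>n. Fs n)" "P ` Fs n \<subseteq> P ` (\<Union>n. Fs n)" for n
    by blast+
  ultimately have "d n \<in> (\<Union>n. Fs n)" "d n \<in> P ` (\<Union>n. Fs n)" for n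
    using chain(4,5)[of n] by auto
  then have "D \<subseteq> (\<Union>n. Fs n)" "D \<subseteq> P ` (\<Union>n. Fs n)"
    unfolding D by (simp_all add: image_subset_iff)
  moreover have "F \<subseteq> (\<Union>n. Fs n)" "\<forall>x\<in>F. P x = p x"
    using UN_upper[of 0 UNIV Fs] P(1) \<open>Fs 0 = F\<close> \<open>ps 0 = p\<close> by auto
  ultimately show ?thesis
    using P(2) by (intro exI[of _ "\<Union>n. Fs n"] exI[of _ P]) simp
qed

lemma isometric_on_imp_uniformly_continuous_on:
  "isometric_on S f \<Longrightarrow> uniformly_continuous_on S f"
  unfolding isometric_on_def uniformly_continuous_on_def by metis

lemma continuous_eq_on_dense:
  fixes f g :: "'a::topological_space \<Rightarrow> 'b::t2_space"
  assumes "continuous_on UNIV f" "continuous_on UNIV g" "closure X = UNIV" "\<forall>x\<in>X. f x = g x"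
  shows "f x = g x"
proof -
  have "closed {x. f x = g x}"
    using assms by (intro closed_Collect_eq) auto
  then have "closure X \<subseteq> {x. f x = g x}"
    using assms(4) by (intro closure_minimal) auto
  then show ?thesis using assms(3) by auto
qed

lemma isometric_on_extend_from_dense:
  fixes P :: "'a::metric_space \<Rightarrow> 'b::complete_space"
  assumes dense: "closure X = UNIV" and "isometric_on X P"
  shows "\<exists>g. isometric_on UNIV g \<and> (\<forall>x\<in>X. g x = P x)"
proof -
  obtain g where "uniformly_continuous_on (closure X) g" and g: "\<And>x. x \<in> X \<Longrightarrow> P x = g x"
    using uniformly_continuous_on_extension_on_closure
      isometric_on_imp_uniformly_continuous_on[OF \<open>isometric_on X P\<close>] by metis
  then have cont: "continuous_on UNIV g"
    using dense uniformly_continuous_imp_continuous by metis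
  have cont2: "continuous_on UNIV (\<lambda>z. g (fst z))" "continuous_on UNIV (\<lambda>z. g (snd z))"
    by (rule continuous_on_compose2[OF cont]; auto intro: continuous_intros)+
  have cont_dist: "continuous_on UNIV (\<lambda>z. dist (fst z) (snd z))"
    by (intro continuous_on_dist continuous_on_fst continuous_on_snd continuous_on_id)
  have "closure (X \<times> X) = UNIV"
    using dense by (simp add: closure_Times)
  then have iso_pairs: "dist (g (fst z)) (g (snd z)) = dist (fst z) (snd z)" for z
    using \<open>isometric_on X P\<close> g cont2 cont_dist
    by (intro continuous_eq_on_dense[where X = "X \<times> X"])
       (auto intro: continuous_on_dist simp: isometric_on_def)
  have "isometric_on UNIV g"
    using iso_pairs[of "(x, y)" for x y] by (simp add: isometric_on_def)
  then show ?thesis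
    using g by (intro exI[of _ g]) simp
qed

lemma dense_isometric_on_extend_to_bij:
  fixes P :: "'a::complete_space \<Rightarrow> 'b::complete_space"
  assumes "closure G = UNIV" "closure (P ` G) = UNIV" and P: "isometric_on G P"
  shows "\<exists>f. bij f \<and> isometric_on UNIV f \<and> (\<forall>x\<in>G. f x = P x)"
proof -
  have "inj_on P G"
    using P unfolding inj_on_def isometric_on_def by (metis dist_eq_0_iff)
  then have Q: "isometric_on (P ` G) (inv_into G P)" "\<forall>x\<in>G. inv_into G P (P x) = x"
    using P by (auto simp: isometric_on_def)
  obtain f where f: "isometric_on UNIV f" "\<forall>x\<in>G. f x = P x"
    using isometric_on_extend_from_dense assms by blast
  obtain f' where f': "isometric_on UNIV f'" "\<forall>y\<in>P ` G. f' y = inv_into G P y"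
    using isometric_on_extend_from_dense[OF _ Q(1)] assms by blast
  have cont: "continuous_on UNIV f" "continuous_on UNIV f'"
    using f(1) f'(1)
    by (auto intro: uniformly_continuous_imp_continuous isometric_on_imp_uniformly_continuous_on)
  have "f' (f x) = id x" for x
    using f f' Q(2) assms(1)
    by (intro continuous_eq_on_dense[where X = G] continuous_on_compose2[OF cont(2) cont(1)])
       (auto intro: continuous_intros)
  moreover have "f (f' y) = id y" for y
    using f f' Q(2) assms(2)
    by (intro continuous_eq_on_dense[where X = "P ` G"] continuous_on_compose2[OF cont(1) cont(2)])
       (auto intro: continuous_intros)
  ultimately have "bij f"
    by (intro o_bij[of f' f]) auto
  then show ?thesis using f by blast
qed

lemma urysohn_space_ultrahomogeneous:
  fixes p :: "'a::complete_space \<Rightarrow> 'a"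
  assumes U: "is_urysohn_space TYPE('a)" and "finite F" and "isometric_on F p"
  shows "\<exists>f. isometry_of f \<and> (\<forall>x\<in>F. f x = p x)"
proof -
  obtain D :: "'a set" where "countable D" "closure D = UNIV"
    and EP: "urysohn_extension_property TYPE('a)"
    using U unfolding is_urysohn_space_def by blast
  obtain G P where "F \<subseteq> G" and cover: "D \<subseteq> G" "D \<subseteq> P ` G"
    and P: "isometric_on G P" "\<forall>x\<in>F. P x = p x"
    using isometric_on_extend_to_cover[OF EP \<open>countable D\<close> assms(2,3)] by blast
  have "closure G = UNIV" "closure (P ` G) = UNIV"
    using \<open>closure D = UNIV\<close> closure_mono[OF cover(1)] closure_mono[OF cover(2)] by auto
  then obtain f where "bij f" "isometric_on UNIV f" "\<forall>x\<in>G. f x = P x"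
    using dense_isometric_on_extend_to_bij[OF _ _ P(1)] by blast
  then show ?thesis
    using \<open>F \<subseteq> G\<close> P(2) unfolding isometry_of_def isometric_on_def
    by (intro exI[of _ f]) auto
qed

lemma urysohn_shifted_copy:
  fixes h :: "'a::metric_space \<Rightarrow> 'a"
  assumes EP: "urysohn_extension_property TYPE('a)"
    and "finite A" and "finite C" and "isometric_on A h" and "\<delta> > 0"
  shows "\<exists>b. isometric_on A b \<and> (\<forall>a\<in>A. \<forall>z\<in>C. dist (b a) z = dist (h a) z + \<delta>)"
  using \<open>finite A\<close> \<open>isometric_on A h\<close>
proof (induction A rule: finite_induct)
  case empty
  then show ?case by (simp add: isometric_on_def)
next
  case (insert a0 A)
  then have "isometric_on A h"
    by (simp add: isometric_on_def)
  then obtain b where b: "isometric_on A b" "\<forall>a\<in>A. \<forall>z\<in>C. dist (b a) z = dist (h a) z + \<delta>"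
    using insert.IH by blast
  \<comment> \<open>The new point b a0 must lie at distance d(h a0, z) + \<delta> from each z \<in> C and at
    distance d(a0, c) from each earlier point b c.\<close>
  define r where "r = case_sum (\<lambda>z. dist (h a0) z + \<delta>) (dist a0)"
  have K: "katetov_on (C <+> A) (case_sum id b) r"
    unfolding r_def
  proof (rule katetov_on_Plus)
    show "katetov_on C id (\<lambda>z. dist (h a0) z + \<delta>)"
      using katetov_on_add_const[OF katetov_on_dist[of C id "h a0"]] \<open>\<delta> > 0\<close> by simp
    show "katetov_on A b (dist a0)"
      using katetov_on_isometric[OF katetov_on_dist[of A id a0], where y = b] b(1)
      by (simp add: isometric_on_def)
    show "\<forall>z\<in>C. \<forall>c\<in>A. \<bar>dist (h a0) z + \<delta> - dist a0 c\<bar> \<le> dist (id z) (b c) \<and>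
                         dist (id z) (b c) \<le> dist (h a0) z + \<delta> + dist a0 c"
    proof (intro ballI)
      fix z c assume "z \<in> C" "c \<in> A"
      then have "dist z (b c) = dist (h c) z + \<delta>" "dist a0 c = dist (h a0) (h c)"
        using b(2) insert.prems \<open>c \<in> A\<close> by (auto simp: dist_commute isometric_on_def)
      then show "\<bar>dist (h a0) z + \<delta> - dist a0 c\<bar> \<le> dist (id z) (b c) \<and>
                 dist (id z) (b c) \<le> dist (h a0) z + \<delta> + dist a0 c"
        using dist_triangle[of "h a0" z "h c"] dist_triangle[of "h c" z "h a0"]
          dist_triangle[of "h a0" "h c" z] \<open>\<delta> > 0\<close>
        by (simp add: dist_commute abs_le_iff)
    qed
  qed
  have pos: "\<forall>i\<in>C <+> A. r i > 0"
    using insert.hyps(2) \<open>\<delta> > 0\<close> by (auto simp: r_def add_nonneg_pos)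
  have "finite (C <+> A)"
    using \<open>finite A\<close> \<open>finite C\<close> by simp
  then obtain u where u: "\<forall>i\<in>C <+> A. dist u (case_sum id b i) = r i"
    using urysohn_extension_property_family[OF EP _ pos K] by blast
  have u_C: "dist u z = dist (h a0) z + \<delta>" if "z \<in> C" for z
    using u[rule_format, OF InlI[OF that]] by (simp add: r_def)
  have u_A: "dist u (b c) = dist a0 c" "dist (b c) u = dist c a0" if "c \<in> A" for c
    using u[rule_format, OF InrI[OF that]] by (simp_all add: r_def dist_commute)
  have "isometric_on (insert a0 A) (b(a0 := u))"
    using b(1) u_A insert.hyps(2) unfolding isometric_on_def by auto
  moreover have "\<forall>a\<in>insert a0 A. \<forall>z\<in>C. dist ((b(a0 := u)) a) z = dist (h a) z + \<delta>"
    using b(2) u_C insert.hyps(2) by auto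
  ultimately show ?case by (intro exI[of _ "b(a0 := u)"] conjI)
qed

theorem mainTheorem15:
  fixes h :: "'a::complete_space \<Rightarrow> 'a" and \<delta> :: real and A :: "'a set"
  assumes "is_urysohn_space TYPE('a)"
    and "isometry_of h"
    and "\<delta> > 0"
    and "finite A"
  shows "\<exists>f. isometry_of f \<and> (\<forall>a\<in>A. dist (f a) (h a) \<le> \<delta>) \<and>
             (\<forall>a\<in>A. \<forall>b\<in>A. dist a (f b) \<ge> \<delta>)"
proof -
  have EP: "urysohn_extension_property TYPE('a)"
    using assms(1) by (simp add: is_urysohn_space_def)
  have "isometric_on A h"
    using assms(2) by (simp add: isometry_of_def isometric_on_def)
  then obtain b where b: "isometric_on A b"
    and shift: "\<forall>a\<in>A. \<forall>z\<in>A \<union> h ` A. dist (b a) z = dist (h a) z + \<delta>"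
    using urysohn_shifted_copy[OF EP \<open>finite A\<close> _ _ \<open>\<delta> > 0\<close>, where C = "A \<union> h ` A"]
      \<open>finite A\<close> by blast
  obtain f where f: "isometry_of f" "\<forall>a\<in>A. f a = b a"
    using urysohn_space_ultrahomogeneous[OF assms(1) \<open>finite A\<close> b] by blast
  have "dist (f a) (h a) = \<delta>" "dist (f a) c = dist (h a) c + \<delta>" if "a \<in> A" "c \<in> A" for a c
    using shift f(2) that by simp_all
  then show ?thesis
    using f(1) by (intro exI[of _ f]) (auto simp: dist_commute)
qed

end
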